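(* Consider the quickest change detection setting and the NGLR-CuSum stopping time $\widehat{\tau}(b)$ with window size $m_b$ satisfying $\liminf_{b\to\infty}m_b/b\ge\eta/I$ for a constant $\eta>1$, as defined in the context. Suppose that there are constants $0<\beta_1,C_1<\infty$, $0<\beta_2<2$, $0<C_2<\infty$ such that, when $X_1,X_2,\dots$ are i.i.d. with density $p_1$ and $n-k$ is large enough, for each $k\le i\le n$, $$\mathrm{E}_{p_1}[\mathrm{KL}(p_1\|\widehat{p}^{n,k}_{-i})]\le\frac{C_1}{(n-k)^{\beta_1}},\qquad \mathrm{E}_{p_1}\Big[\Big(\frac{1}{n-k+1}\sum_{i=k}^n\log\frac{p_1(X_i)}{\widehat{p}^{n,k}_{-i}(X_i)}\Big)^2\Big]\le\frac{C_2}{(n-k+1)^{\beta_2}}.$$ Suppose further that, with $Z_i:=\log(p_1(X_i)/p_0(X_i))$, for every $\delta\in(0,1)$, $$\sup_{t\ge\nu}\mathbb{P}_\nu\Big(\sum_{i=t}^{t+n}Z_i\le(1-\delta)nI\Big)\xrightarrow{n\to\infty}0.$$ Then $\mathrm{WADD}(\widehat{\tau}(b))\le\frac{b}{I}(1+o(1))$ as $b\to\infty$.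
   Context: Let $X_1,X_2,\dots\in\mathbb{R}^d$ be independent; for an unknown deterministic change-point $\nu\ge1$, $X_1,\dots,X_{\nu-1}$ have known density $p_0$ and $X_\nu,X_{\nu+1},\dots$ have unknown density $p_1$, both w.r.t. a dominating measure $\mu$. $\mathcal{F}_0$ is trivial and $\mathcal{F}_n=\sigma(X_1,\dots,X_n)$. $\mathbb{P}_\nu,\mathbb{E}_\nu$ denote probability/expectation with change-point $\nu$; $\mathrm{E}_{p_1}$ denotes expectation when all observations are i.i.d. with density $p_1$. $\mathrm{KL}(p\|q):=\int_{\mathrm{supp}(p)}\log(p/q)p\,d\mu$ and $I:=\mathrm{KL}(p_1\|p_0)$. For a stopping time $\tau$, $\mathrm{WADD}(\tau):=\sup_{\nu\ge1}\operatorname{ess\,sup}\mathbb{E}_\nu[(\tau-\nu+1)^+\mid\mathcal{F}_{\nu-1}]$. A fixed density estimation procedure maps a finite collection of observations to a density w.r.t. $\mu$; for $1\le k\le i\le n$, $\widehat{p}^{n,k}_{-i}$ is its output on $X_k,\dots,X_{i-1},X_{i+1},\dots,X_n$; in $\mathrm{E}_{p_1}[\mathrm{KL}(p_1\|\widehat{p})]$ the expectation is over the estimate. Let $\widehat{Z}^{n,k}_i:=\log(\widehat{p}^{n,k}_{-i}(X_i)/p_0(X_i))$ and $\widehat{\tau}(b):=\inf\{n>1:\max_{(n-m_b)^+<k\le n-1}\sum_{i=k}^n\widehat{Z}^{n,k}_i\ge b\}$. *)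

theory Defs
  imports "HOL-Probability.Probability"
begin

text \<open>Extended-real logarithm of a ratio a/b of density values, with the usual conventions
  log(a/0) = +infinity for a > 0 and log(0/b) = -infinity for b > 0
  (the case a = b = 0 is a null event in the setting below and is set to 0).\<close>
definition llr :: "real \<Rightarrow> real \<Rightarrow> ereal" where
  "llr a b = (if 0 < a \<and> 0 < b then ereal (ln (a / b))
              else if 0 < a then \<infinity> else if 0 < b then - \<infinity> else 0)"

definition KL :: "'a measure \<Rightarrow> ('a \<Rightarrow> real) \<Rightarrow> ('a \<Rightarrow> real) \<Rightarrow> ereal" where
  "KL \<mu> p q =
     enn2ereal (\<integral>\<^sup>+ x \<in> {x \<in> space \<mu>. 0 < p x}. e2ennreal (ereal (p x) * llr (p x) (q x)) \<partial>\<mu>)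
   - enn2ereal (\<integral>\<^sup>+ x \<in> {x \<in> space \<mu>. 0 < p x}. e2ennreal (- (ereal (p x) * llr (p x) (q x))) \<partial>\<mu>)"

definition is_density :: "'a measure \<Rightarrow> ('a \<Rightarrow> real) \<Rightarrow> bool" where
  "is_density \<mu> p \<longleftrightarrow> p \<in> borel_measurable \<mu> \<and> (\<forall>x\<in>space \<mu>. 0 \<le> p x)
     \<and> (\<integral>\<^sup>+ x. ennreal (p x) \<partial>\<mu>) = 1"

text \<open>Law of the whole observation sequence with change-point nu: coordinate j of the
  sample path omega is X_j (j \<ge> 1); coordinate 0 is an unused dummy.\<close>
definition law :: "'a measure \<Rightarrow> ('a \<Rightarrow> real) \<Rightarrow> ('a \<Rightarrow> real) \<Rightarrow> nat \<Rightarrow> (nat \<Rightarrow> 'a) measure" where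
  "law \<mu> p0 p1 \<nu> = (\<Pi>\<^sub>M j\<in>UNIV. if j < \<nu> then density \<mu> (\<lambda>x. ennreal (p0 x))
                                   else density \<mu> (\<lambda>x. ennreal (p1 x)))"

definition iid_law :: "'a measure \<Rightarrow> ('a \<Rightarrow> real) \<Rightarrow> (nat \<Rightarrow> 'a) measure" where
  "iid_law \<mu> p = (\<Pi>\<^sub>M j\<in>UNIV. density \<mu> (\<lambda>x. ennreal (p x)))"

definition filt :: "'a measure \<Rightarrow> (nat \<Rightarrow> 'a) measure \<Rightarrow> nat \<Rightarrow> (nat \<Rightarrow> 'a) measure" where
  "filt \<mu> M n = sigma (space M) {{\<omega> \<in> space M. \<omega> j \<in> A} | j A. j \<in> {1..n} \<and> A \<in> sets \<mu>}"

definition loo_est :: "('a list \<Rightarrow> 'a \<Rightarrow> real) \<Rightarrow> (nat \<Rightarrow> 'a) \<Rightarrow> nat \<Rightarrow> nat \<Rightarrow> nat \<Rightarrow> 'a \<Rightarrow> real" where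
  "loo_est est \<omega> n k i = est (map \<omega> ([k..<i] @ [Suc i..<Suc n]))"

definition Zhat :: "('a list \<Rightarrow> 'a \<Rightarrow> real) \<Rightarrow> ('a \<Rightarrow> real) \<Rightarrow> (nat \<Rightarrow> 'a) \<Rightarrow> nat \<Rightarrow> nat \<Rightarrow> nat \<Rightarrow> ereal" where
  "Zhat est p0 \<omega> n k i = llr (loo_est est \<omega> n k i (\<omega> i)) (p0 (\<omega> i))"

definition stops :: "('a list \<Rightarrow> 'a \<Rightarrow> real) \<Rightarrow> ('a \<Rightarrow> real) \<Rightarrow> nat \<Rightarrow> real \<Rightarrow> (nat \<Rightarrow> 'a) \<Rightarrow> nat \<Rightarrow> bool" where
  "stops est p0 m b \<omega> n \<longleftrightarrow>
     (\<exists>k. n - m < k \<and> k \<le> n - 1 \<and> ereal b \<le> (\<Sum>i=k..n. Zhat est p0 \<omega> n k i))"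

definition nglr_tau :: "('a list \<Rightarrow> 'a \<Rightarrow> real) \<Rightarrow> ('a \<Rightarrow> real) \<Rightarrow> nat \<Rightarrow> real \<Rightarrow> (nat \<Rightarrow> 'a) \<Rightarrow> enat" where
  "nglr_tau est p0 m b \<omega> =
     (if \<exists>n. 1 < n \<and> stops est p0 m b \<omega> n
      then enat (LEAST n. 1 < n \<and> stops est p0 m b \<omega> n) else \<infinity>)"

definition delay :: "enat \<Rightarrow> nat \<Rightarrow> ennreal" where
  "delay t \<nu> = (case t of enat s \<Rightarrow> ennreal (real (s + 1 - \<nu>)) | \<infinity> \<Rightarrow> \<infinity>)"

definition WADD :: "'a measure \<Rightarrow> ('a \<Rightarrow> real) \<Rightarrow> ('a \<Rightarrow> real) \<Rightarrow> ((nat \<Rightarrow> 'a) \<Rightarrow> enat) \<Rightarrow> ennreal" where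
  "WADD \<mu> p0 p1 \<tau> = (SUP \<nu>\<in>{1..}. esssup (law \<mu> p0 p1 \<nu>)
       (nn_cond_exp (law \<mu> p0 p1 \<nu>) (filt \<mu> (law \<mu> p0 p1 \<nu>) (\<nu> - 1)) (\<lambda>\<omega>. delay (\<tau> \<omega>) \<nu>)))"

end

theory Submission
  imports Defs
begin

text \<open>After the change the observations are i.i.d. with density \<open>p\<^sub>1\<close> and independent of the
  pre-change past, so the worst-case delay is bounded by an expected delay under the i.i.d. law.
  Cut the post-change sample into disjoint consecutive blocks of length \<open>L \<approx> (1 + \<epsilon>') b / I \<le> m\<^sub>b\<close>.
  Every block is an admissible window of the stopping rule, so the delay is at most \<open>L\<close> times the
  index of the first block whose leave-one-out statistic reaches \<open>b\<close>. On a block this statistic is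
  the true log-likelihood ratio sum minus a remainder whose mean square is \<open>O(L\<^sup>-\<^sup>\<beta>)\<close>; by
  Chebyshev's inequality and the concentration of the true sum above \<open>(1 - \<delta>) L I > b\<close>, a block
  fails with a probability \<open>q\<close> that is small for large \<open>b\<close>. The blocks being independent, the index
  of the first success has mean at most \<open>1 / (1 - q)\<close>, whence \<open>WADD \<le> L / (1 - q) \<le> (1 + \<epsilon>) b / I\<close>.\<close>

section \<open>Independence in infinite product spaces\<close>

lemma indep_vars_PiM_components:
  assumes M: "\<And>i. prob_space (M i)"
  shows "prob_space.indep_vars (PiM UNIV M) M (\<lambda>i \<omega>. \<omega> i) UNIV"
proof -
  interpret prob_space "PiM UNIV M" by (intro prob_space_PiM M)
  have "distr (PiM UNIV M) (PiM UNIV M) (\<lambda>\<omega>. \<lambda>i\<in>UNIV. \<omega> i) = PiM UNIV M"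
    by (simp add: restrict_UNIV distr_id)
  moreover have "(\<Pi>\<^sub>M i\<in>UNIV. distr (PiM UNIV M) (M i) (\<lambda>\<omega>. \<omega> i)) = PiM UNIV M"
    by (intro PiM_cong refl distr_PiM_component M) auto
  ultimately show ?thesis
    by (subst indep_vars_iff_distr_eq_PiM) auto
qed

lemma nn_integral_PiM_restrict_mult:
  fixes f g :: "_ \<Rightarrow> ennreal"
  assumes M: "\<And>i. prob_space (M i)" and AB: "A \<inter> B = {}"
    and f: "f \<in> borel_measurable (PiM A M)" and g: "g \<in> borel_measurable (PiM B M)"
  shows "(\<integral>\<^sup>+\<omega>. f (restrict \<omega> A) * g (restrict \<omega> B) \<partial>PiM UNIV M)
     = (\<integral>\<^sup>+\<omega>. f (restrict \<omega> A) \<partial>PiM UNIV M) * (\<integral>\<^sup>+\<omega>. g (restrict \<omega> B) \<partial>PiM UNIV M)"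
proof -
  interpret prob_space "PiM UNIV M" by (intro prob_space_PiM M)
  define X where "X = case_bool (f \<circ> (\<lambda>\<omega>. restrict \<omega> A)) (g \<circ> (\<lambda>\<omega>. restrict \<omega> B))"
  have "indep_var (PiM A M) (\<lambda>\<omega>. restrict \<omega> A) (PiM B M) (\<lambda>\<omega>. restrict \<omega> B)"
    using indep_var_restrict[OF indep_vars_PiM_components[OF M] AB] by simp
  then have "indep_var borel (f \<circ> (\<lambda>\<omega>. restrict \<omega> A)) borel (g \<circ> (\<lambda>\<omega>. restrict \<omega> B))"
    by (intro indep_var_compose[OF _ f g])
  moreover have "(case_bool borel borel :: bool \<Rightarrow> ennreal measure) = (\<lambda>_. borel)"
    by (auto simp: fun_eq_iff split: bool.split)
  ultimately have "indep_vars (\<lambda>_. borel) X UNIV"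
    by (simp add: indep_var_def X_def)
  then have "(\<integral>\<^sup>+\<omega>. (\<Prod>i\<in>UNIV. X i \<omega>) \<partial>PiM UNIV M) = (\<Prod>i\<in>UNIV. \<integral>\<^sup>+\<omega>. X i \<omega> \<partial>PiM UNIV M)"
    by (intro indep_vars_nn_integral) auto
  then show ?thesis by (simp add: X_def UNIV_bool mult.commute o_def)
qed

lemma emeasure_PiM_conj_indep:
  assumes M: "\<And>i. prob_space (M i)" and AB: "A \<inter> B = {}"
    and P: "Measurable.pred (PiM A M) P" and Q: "Measurable.pred (PiM B M) Q"
    and P_local: "\<And>\<omega>. P (restrict \<omega> A) = P \<omega>" and Q_local: "\<And>\<omega>. Q (restrict \<omega> B) = Q \<omega>"
  shows "emeasure (PiM UNIV M) {\<omega> \<in> space (PiM UNIV M). P \<omega> \<and> Q \<omega>}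
    = emeasure (PiM UNIV M) {\<omega> \<in> space (PiM UNIV M). P \<omega>} * emeasure (PiM UNIV M) {\<omega> \<in> space (PiM UNIV M). Q \<omega>}"
proof -
  let ?\<Pi> = "PiM UNIV M"
  have [measurable]: "Measurable.pred ?\<Pi> P" "Measurable.pred ?\<Pi> Q"
    using measurable_compose[OF measurable_restrict_subset P] measurable_compose[OF measurable_restrict_subset Q]
    by (simp_all add: P_local Q_local)
  have emeasure_eq: "emeasure ?\<Pi> {\<omega> \<in> space ?\<Pi>. R \<omega>} = (\<integral>\<^sup>+\<omega>. (if R \<omega> then 1 else 0) \<partial>?\<Pi>)"
    if "Measurable.pred ?\<Pi> R" for R
  proof -
    have "{\<omega> \<in> space ?\<Pi>. R \<omega>} \<in> sets ?\<Pi>" using that by measurable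
    then have "emeasure ?\<Pi> {\<omega> \<in> space ?\<Pi>. R \<omega>} = (\<integral>\<^sup>+\<omega>. indicator {\<omega> \<in> space ?\<Pi>. R \<omega>} \<omega> \<partial>?\<Pi>)"
      by simp
    then show ?thesis by (auto intro!: nn_integral_cong simp: indicator_def)
  qed
  have "emeasure ?\<Pi> {\<omega> \<in> space ?\<Pi>. P \<omega> \<and> Q \<omega>}
      = (\<integral>\<^sup>+\<omega>. (if P (restrict \<omega> A) then 1 else 0) * (if Q (restrict \<omega> B) then 1 else 0) \<partial>?\<Pi>)"
    by (subst emeasure_eq) (auto intro!: nn_integral_cong simp: P_local Q_local)
  also have "\<dots> = (\<integral>\<^sup>+\<omega>. (if P (restrict \<omega> A) then 1 else 0) \<partial>?\<Pi>) * (\<integral>\<^sup>+\<omega>. (if Q (restrict \<omega> B) then 1 else 0) \<partial>?\<Pi>)"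
    by (rule nn_integral_PiM_restrict_mult[OF M AB]) (use P Q in measurable)
  finally show ?thesis
    by (simp add: emeasure_eq P_local Q_local)
qed

lemma (in finite_measure) emeasure_square_ge_le:
  fixes S :: "'a \<Rightarrow> ereal"
  assumes [measurable]: "S \<in> borel_measurable M" and \<delta>: "0 < \<delta>" and B: "0 \<le> B"
    and bound: "(\<integral>\<^sup>+\<omega>. e2ennreal (S \<omega> * S \<omega>) \<partial>M) \<le> ennreal B"
  shows "emeasure M {\<omega> \<in> space M. ereal (\<delta>\<^sup>2) \<le> S \<omega> * S \<omega>} \<le> ennreal (B / \<delta>\<^sup>2)"
proof -
  let ?E = "{\<omega> \<in> space M. ereal (\<delta>\<^sup>2) \<le> S \<omega> * S \<omega>}"
  have E: "?E \<in> sets M" by measurable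
  have "ennreal (measure M ?E * \<delta>\<^sup>2) = ennreal (\<delta>\<^sup>2) * emeasure M ?E"
    by (simp add: emeasure_eq_measure ennreal_mult'' mult.commute)
  also have "\<dots> = (\<integral>\<^sup>+\<omega>. ennreal (\<delta>\<^sup>2) * indicator ?E \<omega> \<partial>M)"
    by (rule nn_integral_cmult_indicator[OF E, symmetric])
  also have "\<dots> \<le> (\<integral>\<^sup>+\<omega>. e2ennreal (S \<omega> * S \<omega>) \<partial>M)"
  proof (rule nn_integral_mono)
    fix \<omega> assume "\<omega> \<in> space M"
    then show "ennreal (\<delta>\<^sup>2) * indicator ?E \<omega> \<le> e2ennreal (S \<omega> * S \<omega>)"
      using e2ennreal_mono[of "ereal (\<delta>\<^sup>2)" "S \<omega> * S \<omega>"] by (auto simp: indicator_def)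
  qed
  also have "\<dots> \<le> ennreal B"
    by (rule bound)
  finally have "measure M ?E * \<delta>\<^sup>2 \<le> B"
    using B by (simp add: ennreal_le_iff)
  then show ?thesis
    using \<delta> by (simp add: emeasure_eq_measure field_simps ennreal_leI)
qed

lemma (in prob_space) emeasure_le_SUP_measure:
  assumes "k \<in> T"
  shows "emeasure M (A k) \<le> ennreal (SUP t\<in>T. measure M (A t))"
proof -
  have "measure M (A k) \<le> (SUP t\<in>T. measure M (A t))"
    using assms by (intro cSUP_upper bdd_aboveI[where M=1]) auto
  then show ?thesis
    by (simp add: emeasure_eq_measure ennreal_leI)
qed

lemma eventually_div_powr_less:
  fixes c \<beta> e :: real
  assumes "0 < \<beta>" "0 < e"
  shows "\<forall>\<^sub>F n in sequentially. c / real n powr \<beta> < e"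
proof -
  have "(\<lambda>n. c * real n powr (-\<beta>)) \<longlonglongrightarrow> 0"
    using assms(1) by (intro tendsto_mult_right_zero tendsto_neg_powr filterlim_real_sequentially) simp
  from order_tendstoD(2)[OF this assms(2)] show ?thesis
    by eventually_elim (simp add: powr_minus divide_inverse)
qed

section \<open>Log-likelihood ratios\<close>

lemma measurable_llr [measurable]:
  assumes [measurable]: "f \<in> borel_measurable M" "g \<in> borel_measurable M"
  shows "(\<lambda>x. llr (f x) (g x)) \<in> borel_measurable M"
  unfolding llr_def by measurable

lemma llr_neq_MInfty: "0 < a \<Longrightarrow> llr a c \<noteq> -\<infinity>"
  by (simp add: llr_def)

lemma llr_add_llr:
  assumes "0 < a" "0 \<le> c" "0 \<le> d" and "llr a c \<noteq> \<infinity>"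
  shows "llr c d + llr a c = llr a d"
proof -
  have "0 < c" using assms unfolding llr_def by (auto split: if_splits)
  then show ?thesis
    using assms by (cases "0 < d") (simp_all add: llr_def ln_div)
qed

lemma ereal_sum_ge_of_small_remainder:
  fixes Z R Zh :: "'i \<Rightarrow> ereal"
  assumes A: "finite A" and c: "0 < c" and \<delta>: "0 < \<delta>" and ab: "b + \<delta> * c \<le> a"
    and R_neq_MInf: "\<forall>i\<in>A. R i \<noteq> -\<infinity>"
    and split: "\<forall>i\<in>A. R i \<noteq> \<infinity> \<longrightarrow> Zh i + R i = Z i"
    and R_small: "(ereal (1 / c) * sum R A) * (ereal (1 / c) * sum R A) < ereal (\<delta>\<^sup>2)"
    and Z_large: "ereal a < sum Z A"
  shows "ereal b \<le> sum Zh A"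
proof -
  have R_neq_PInf: "\<forall>i\<in>A. R i \<noteq> \<infinity>"
  proof (rule ccontr)
    assume "\<not> (\<forall>i\<in>A. R i \<noteq> \<infinity>)"
    then have "ereal (1 / c) * sum R A = \<infinity>"
      using A c R_neq_MInf by (simp add: sum_Pinfty)
    then show False using R_small by (simp only:) simp
  qed
  define r where "r i = real_of_ereal (R i)" for i
  have sum_R: "sum R A = ereal (sum r A)"
  proof -
    have "R i = ereal (r i)" if "i \<in> A" for i
      using that R_neq_PInf R_neq_MInf unfolding r_def by (cases "R i") auto
    then show ?thesis by (simp cong: sum.cong)
  qed
  have r_small: "sum r A < \<delta> * c"
  proof (rule ccontr)
    assume "\<not> sum r A < \<delta> * c"
    then have "\<delta> \<le> sum r A / c" using c by (simp add: field_simps)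
    then have "\<delta> * \<delta> \<le> (sum r A / c) * (sum r A / c)" using \<delta> by (intro mult_mono) auto
    then show False using R_small by (simp add: sum_R power2_eq_square)
  qed
  have "sum Zh A + sum R A = sum Z A"
    unfolding sum.distrib[symmetric] using split R_neq_PInf by (intro sum.cong) auto
  then have split_sum: "sum Zh A + ereal (sum r A) = sum Z A"
    by (simp add: sum_R)
  show ?thesis
  proof (cases "sum Zh A")
    case (real z)
    then have "ereal a < ereal (z + sum r A)" using split_sum Z_large by simp
    then show ?thesis using real r_small ab by simp
  next
    case MInf
    then have "sum Z A = -\<infinity>" using split_sum by simp
    then show ?thesis using Z_large by simp
  qed simp
qed

text \<open>\<open>log(x\<^sub>h/x\<^sub>0) = log(x\<^sub>1/x\<^sub>0) - log(x\<^sub>1/x\<^sub>h)\<close>: the estimated log-likelihood ratios exceed the true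
  ones up to a remainder controlled by the estimation error.\<close>
lemma sum_llr_ge_of_small_remainder:
  fixes x1 xh x0 :: "'i \<Rightarrow> real"
  assumes "finite A" "0 < c" "0 < \<delta>" "b + \<delta> * c \<le> a"
    and "\<And>i. i \<in> A \<Longrightarrow> 0 < x1 i" "\<And>i. i \<in> A \<Longrightarrow> 0 \<le> xh i" "\<And>i. i \<in> A \<Longrightarrow> 0 \<le> x0 i"
    and "(ereal (1 / c) * (\<Sum>i\<in>A. llr (x1 i) (xh i))) * (ereal (1 / c) * (\<Sum>i\<in>A. llr (x1 i) (xh i)))
           < ereal (\<delta>\<^sup>2)"
    and "ereal a < (\<Sum>i\<in>A. llr (x1 i) (x0 i))"
  shows "ereal b \<le> (\<Sum>i\<in>A. llr (xh i) (x0 i))"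
proof (rule ereal_sum_ge_of_small_remainder[OF assms(1-4) _ _ assms(8,9)])
  show "\<forall>i\<in>A. llr (x1 i) (xh i) \<noteq> -\<infinity>"
    using assms(5) llr_neq_MInfty by blast
  show "\<forall>i\<in>A. llr (x1 i) (xh i) \<noteq> \<infinity> \<longrightarrow> llr (xh i) (x0 i) + llr (x1 i) (xh i) = llr (x1 i) (x0 i)"
    using assms(5-7) llr_add_llr by blast
qed

section \<open>Leave-one-out statistics and the observation filtration\<close>

lemma loo_est_shift: "loo_est est (\<lambda>t. \<omega> (t + s)) n k i = loo_est est \<omega> (n + s) (k + s) (i + s)"
proof -
  have "map (\<lambda>t. \<omega> (t + s)) [a..<c] = map \<omega> [a + s..<c + s]" for a c
    by (induct c) auto
  then show ?thesis unfolding loo_est_def by simp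
qed

lemma Zhat_shift: "Zhat est p0 (\<lambda>t. \<omega> (t + s)) n k i = Zhat est p0 \<omega> (n + s) (k + s) (i + s)"
  unfolding Zhat_def loo_est_shift by simp

lemma loo_est_cong:
  assumes "\<And>t. t \<in> {k..n} \<Longrightarrow> x t = y t" "i \<in> {k..n}"
  shows "loo_est est x n k i = loo_est est y n k i"
proof -
  have "map x ([k..<i] @ [Suc i..<Suc n]) = map y ([k..<i] @ [Suc i..<Suc n])"
    using assms by (intro map_cong refl) auto
  then show ?thesis unfolding loo_est_def by metis
qed

lemma Zhat_cong:
  assumes "\<And>t. t \<in> {k..n} \<Longrightarrow> x t = y t" "i \<in> {k..n}"
  shows "Zhat est p0 x n k i = Zhat est p0 y n k i"
  unfolding Zhat_def using loo_est_cong[OF assms] assms by simp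

lemma prob_space_density_is_density:
  assumes "is_density \<mu> p" shows "prob_space (density \<mu> (\<lambda>x. ennreal (p x)))"
  using assms by (intro prob_spaceI) (simp add: emeasure_density is_density_def)

lemma iid_law_eq_law_0: "iid_law \<mu> p1 = law \<mu> p0 p1 0"
  unfolding iid_law_def law_def by simp

lemma space_filt: "space (filt \<mu> M n) = space M"
  unfolding filt_def by (rule space_measure_of) auto

lemma sets_filt_subset:
  assumes "\<And>j. sets (N j) = sets \<mu>"
  shows "sets (filt \<mu> (PiM UNIV N) n) \<subseteq> sets (PiM UNIV N)"
proof -
  let ?G = "{{\<omega> \<in> space (PiM UNIV N). \<omega> j \<in> A} | j A. j \<in> {1..n} \<and> A \<in> sets \<mu>}"
  have "?G \<subseteq> sets (PiM UNIV N)"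
    using assms by (auto intro!: sets_Collect_single)
  moreover have "sets (filt \<mu> (PiM UNIV N) n) = sigma_sets (space (PiM UNIV N)) ?G"
    unfolding filt_def by (subst sets_measure_of) auto
  ultimately show ?thesis
    using sets.sigma_sets_subset[of ?G "PiM UNIV N"] by simp
qed

lemma sets_filt_restrict_past:
  assumes N: "\<And>j. sets (N j) = sets \<mu>" and A: "A \<in> sets (filt \<mu> (PiM UNIV N) n)"
  obtains A' where "A' \<in> sets (PiM {..n} N)" and "A = (\<lambda>\<omega>. restrict \<omega> {..n}) -` A' \<inter> space (PiM UNIV N)"
proof -
  let ?r = "\<lambda>\<omega>. restrict \<omega> {..n}"
  define V where "V = vimage_algebra (space (PiM UNIV N)) ?r (PiM {..n} N)"
  have r: "?r \<in> space (PiM UNIV N) \<rightarrow> space (PiM {..n} N)"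
    by (auto simp: space_PiM PiE_iff)
  have sets_V: "sets V = {?r -` A' \<inter> space (PiM UNIV N) | A'. A' \<in> sets (PiM {..n} N)}"
    unfolding V_def by (rule sets_vimage_algebra2[OF r])
  have "{\<omega> \<in> space (PiM UNIV N). \<omega> j \<in> B} \<in> sets V" if "j \<le> n" "B \<in> sets \<mu>" for j B
  proof -
    have "{\<omega> \<in> space (PiM UNIV N). \<omega> j \<in> B} = ?r -` {x \<in> space (PiM {..n} N). x j \<in> B} \<inter> space (PiM UNIV N)"
      using that r by auto
    moreover have "{x \<in> space (PiM {..n} N). x j \<in> B} \<in> sets (PiM {..n} N)"
      using that N by (intro sets_Collect_single) auto
    ultimately show ?thesis unfolding sets_V by blast
  qed
  then have "sigma_sets (space (PiM UNIV N)) {{\<omega> \<in> space (PiM UNIV N). \<omega> j \<in> B} | j B. j \<in> {1..n} \<and> B \<in> sets \<mu>} \<subseteq> sets V"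
    by (intro sets.sigma_sets_subset[of _ V, simplified V_def space_vimage_algebra, folded V_def]) auto
  then have "sets (filt \<mu> (PiM UNIV N) n) \<subseteq> sets V"
    unfolding filt_def by (subst sets_measure_of) auto
  then show ?thesis using A that unfolding sets_V by blast
qed

section \<open>The change-point model\<close>

locale change_point_model =
  fixes \<mu> :: "'a measure" and p0 p1 :: "'a \<Rightarrow> real"
  assumes density_p0: "is_density \<mu> p0" and density_p1: "is_density \<mu> p1"
begin

definition obs_law :: "nat \<Rightarrow> nat \<Rightarrow> 'a measure" where
  "obs_law \<nu> j = (if j < \<nu> then density \<mu> (\<lambda>x. ennreal (p0 x)) else density \<mu> (\<lambda>x. ennreal (p1 x)))"

lemma law_eq_PiM_obs_law: "law \<mu> p0 p1 \<nu> = PiM UNIV (obs_law \<nu>)"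
  by (simp add: law_def obs_law_def[abs_def])

lemma sets_obs_law [simp]: "sets (obs_law \<nu> j) = sets \<mu>"
  by (simp add: obs_law_def)

lemma prob_space_obs_law: "prob_space (obs_law \<nu> j)"
  using prob_space_density_is_density[OF density_p0] prob_space_density_is_density[OF density_p1]
  by (simp add: obs_law_def)

lemma prob_space_law: "prob_space (law \<mu> p0 p1 \<nu>)"
  unfolding law_eq_PiM_obs_law by (intro prob_space_PiM prob_space_obs_law)

lemma iid_law_eq_PiM_obs_law: "iid_law \<mu> p1 = PiM UNIV (obs_law 0)"
  by (simp add: iid_law_eq_law_0[of _ _ p0] law_eq_PiM_obs_law)

lemma prob_space_iid_law: "prob_space (iid_law \<mu> p1)"
  unfolding iid_law_eq_law_0[of _ _ p0] by (rule prob_space_law)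

lemma measurable_p0 [measurable]: "p0 \<in> borel_measurable \<mu>"
  and measurable_p1 [measurable]: "p1 \<in> borel_measurable \<mu>"
  using density_p0 density_p1 by (simp_all add: is_density_def)

lemma measurable_law_component [measurable]: "(\<lambda>\<omega>. \<omega> i) \<in> measurable (law \<mu> p0 p1 \<nu>) \<mu>"
  using measurable_component_singleton[of i UNIV "obs_law \<nu>"]
  by (simp add: law_eq_PiM_obs_law cong: measurable_cong_sets)

lemma measurable_iid_law_component [measurable]: "(\<lambda>\<omega>. \<omega> i) \<in> measurable (iid_law \<mu> p1) \<mu>"
  unfolding iid_law_eq_law_0[of _ _ p0] by (rule measurable_law_component)

lemma measurable_shift_PiM:
  assumes "\<And>n. n + s \<in> K" "\<And>j. sets (N j) = sets \<mu>"
  shows "(\<lambda>\<omega> n. \<omega> (n + s)) \<in> measurable (PiM K N) (iid_law \<mu> p1)"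
  unfolding iid_law_def
proof (rule measurable_PiM_single')
  show "(\<lambda>\<omega>. \<omega> (n + s)) \<in> measurable (PiM K N) (density \<mu> (\<lambda>x. ennreal (p1 x)))" for n
    using measurable_component_singleton[of "n + s" K N] assms by (simp cong: measurable_cong_sets)
  have "space (N j) = space \<mu>" for j
    using sets_eq_imp_space_eq[OF assms(2)] .
  then show "(\<lambda>\<omega> n. \<omega> (n + s)) \<in> space (PiM K N) \<rightarrow> (\<Pi>\<^sub>E n\<in>UNIV. space (density \<mu> (\<lambda>x. ennreal (p1 x))))"
    using assms(1) by (auto simp: space_PiM PiE_iff)
qed

lemma measurable_shift: "(\<lambda>\<omega> n. \<omega> (n + s)) \<in> measurable (law \<mu> p0 p1 \<nu>) (iid_law \<mu> p1)"
  unfolding law_eq_PiM_obs_law by (rule measurable_shift_PiM) auto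

lemma distr_law_shift:
  assumes "\<nu> \<le> s"
  shows "distr (law \<mu> p0 p1 \<nu>) (iid_law \<mu> p1) (\<lambda>\<omega> n. \<omega> (n + s)) = iid_law \<mu> p1"
proof -
  have "distr (PiM UNIV (obs_law \<nu>)) (\<Pi>\<^sub>M n\<in>UNIV. obs_law \<nu> (n + s)) (\<lambda>\<omega>. \<lambda>n\<in>UNIV. \<omega> (n + s))
      = (\<Pi>\<^sub>M n\<in>UNIV. obs_law \<nu> (n + s))"
    by (rule distr_PiM_reindex[OF prob_space_obs_law]) (auto simp: inj_on_def)
  moreover have "(\<Pi>\<^sub>M n\<in>UNIV. obs_law \<nu> (n + s)) = iid_law \<mu> p1"
    unfolding iid_law_def obs_law_def using assms by (intro PiM_cong) auto
  ultimately show ?thesis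
    by (simp add: law_eq_PiM_obs_law restrict_UNIV)
qed

lemma nn_integral_law_shift:
  assumes "\<nu> \<le> s" and [measurable]: "h \<in> borel_measurable (iid_law \<mu> p1)"
  shows "(\<integral>\<^sup>+\<omega>. h (\<lambda>n. \<omega> (n + s)) \<partial>law \<mu> p0 p1 \<nu>) = (\<integral>\<^sup>+y. h y \<partial>iid_law \<mu> p1)"
  using nn_integral_distr[OF measurable_shift, of h \<nu> s] distr_law_shift[OF assms(1)] by simp

lemma emeasure_law_shift:
  assumes "\<nu> \<le> s" and Q: "Measurable.pred (iid_law \<mu> p1) Q"
  shows "emeasure (law \<mu> p0 p1 \<nu>) {\<omega> \<in> space (law \<mu> p0 p1 \<nu>). Q (\<lambda>n. \<omega> (n + s))}
    = emeasure (iid_law \<mu> p1) {y \<in> space (iid_law \<mu> p1). Q y}"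
proof -
  have "{y \<in> space (iid_law \<mu> p1). Q y} \<in> sets (iid_law \<mu> p1)"
    using Q unfolding pred_def .
  from emeasure_distr[OF measurable_shift[of s \<nu>] this]
  have "emeasure (iid_law \<mu> p1) {y \<in> space (iid_law \<mu> p1). Q y}
    = emeasure (law \<mu> p0 p1 \<nu>) ((\<lambda>\<omega> n. \<omega> (n + s)) -` {y \<in> space (iid_law \<mu> p1). Q y} \<inter> space (law \<mu> p0 p1 \<nu>))"
    by (simp only: distr_law_shift[OF assms(1)])
  also have "(\<lambda>\<omega> n. \<omega> (n + s)) -` {y \<in> space (iid_law \<mu> p1). Q y} \<inter> space (law \<mu> p0 p1 \<nu>)
    = {\<omega> \<in> space (law \<mu> p0 p1 \<nu>). Q (\<lambda>n. \<omega> (n + s))}"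
    using measurable_space[OF measurable_shift[of s \<nu>]] by auto
  finally show ?thesis ..
qed

lemma emeasure_llr_sum_le_eq:
  assumes "\<nu> \<le> k" "\<nu>' \<le> k" "k \<le> n"
  shows "emeasure (law \<mu> p0 p1 \<nu>) {\<omega> \<in> space (law \<mu> p0 p1 \<nu>). (\<Sum>i=k..n. llr (p1 (\<omega> i)) (p0 (\<omega> i))) \<le> ereal a}
    = emeasure (law \<mu> p0 p1 \<nu>') {\<omega> \<in> space (law \<mu> p0 p1 \<nu>'). (\<Sum>i=k..n. llr (p1 (\<omega> i)) (p0 (\<omega> i))) \<le> ereal a}"
proof -
  define Q where "Q y \<longleftrightarrow> (\<Sum>i=0..n-k. llr (p1 (y i)) (p0 (y i))) \<le> ereal a" for y
  have [measurable]: "Measurable.pred (iid_law \<mu> p1) Q"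
    unfolding Q_def by measurable
  have "(\<Sum>i=k..n. llr (p1 (\<omega> i)) (p0 (\<omega> i))) \<le> ereal a \<longleftrightarrow> Q (\<lambda>i. \<omega> (i + k))" for \<omega>
    using sum.shift_bounds_cl_nat_ivl[of "\<lambda>i. llr (p1 (\<omega> i)) (p0 (\<omega> i))" 0 k "n - k"] assms(3)
    by (simp add: Q_def)
  then show ?thesis
    using emeasure_law_shift[OF assms(1)] emeasure_law_shift[OF assms(2)] by simp
qed

lemma set_nn_integral_filt_shift:
  assumes \<nu>: "1 \<le> \<nu>" and A: "A \<in> sets (filt \<mu> (law \<mu> p0 p1 \<nu>) (\<nu> - 1))"
    and g [measurable]: "g \<in> borel_measurable (iid_law \<mu> p1)"
  shows "(\<integral>\<^sup>+\<omega>\<in>A. g (\<lambda>n. \<omega> (n + \<nu>)) \<partial>law \<mu> p0 p1 \<nu>)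
    = emeasure (law \<mu> p0 p1 \<nu>) A * (\<integral>\<^sup>+y. g y \<partial>iid_law \<mu> p1)"
proof -
  let ?P = "law \<mu> p0 p1 \<nu>"
  obtain A' where A': "A' \<in> sets (PiM {..\<nu> - 1} (obs_law \<nu>))"
    and A_eq: "A = (\<lambda>\<omega>. restrict \<omega> {..\<nu> - 1}) -` A' \<inter> space ?P"
    using sets_filt_restrict_past[of "obs_law \<nu>", OF _ A[unfolded law_eq_PiM_obs_law]]
    by (auto simp: law_eq_PiM_obs_law)
  have A_sets: "A \<in> sets ?P"
    using A sets_filt_subset[of "obs_law \<nu>" \<mu>] by (auto simp: law_eq_PiM_obs_law)
  have future: "(\<lambda>z. g (\<lambda>n. z (n + \<nu>))) \<in> borel_measurable (PiM {\<nu>..} (obs_law \<nu>))"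
    by (rule measurable_compose[OF measurable_shift_PiM g]) auto
  have "(\<integral>\<^sup>+\<omega>\<in>A. g (\<lambda>n. \<omega> (n + \<nu>)) \<partial>?P)
      = (\<integral>\<^sup>+\<omega>. indicator A' (restrict \<omega> {..\<nu> - 1}) * g (\<lambda>n. restrict \<omega> {\<nu>..} (n + \<nu>)) \<partial>?P)"
    by (auto intro!: nn_integral_cong simp: A_eq indicator_def)
  also have "\<dots> = (\<integral>\<^sup>+\<omega>. indicator A' (restrict \<omega> {..\<nu> - 1}) \<partial>?P)
                  * (\<integral>\<^sup>+\<omega>. g (\<lambda>n. restrict \<omega> {\<nu>..} (n + \<nu>)) \<partial>?P)"
    unfolding law_eq_PiM_obs_law
    by (rule nn_integral_PiM_restrict_mult[OF prob_space_obs_law]) (use \<nu> A' future in auto)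
  also have "(\<integral>\<^sup>+\<omega>. indicator A' (restrict \<omega> {..\<nu> - 1}) \<partial>?P) = (\<integral>\<^sup>+\<omega>. indicator A \<omega> \<partial>?P)"
    by (auto intro!: nn_integral_cong simp: A_eq indicator_def)
  also have "\<dots> = emeasure ?P A"
    using A_sets by simp
  also have "(\<integral>\<^sup>+\<omega>. g (\<lambda>n. restrict \<omega> {\<nu>..} (n + \<nu>)) \<partial>?P) = (\<integral>\<^sup>+y. g y \<partial>iid_law \<mu> p1)"
    using nn_integral_law_shift[of \<nu> \<nu> g] by simp
  finally show ?thesis .
qed

lemma AE_iid_law_p1_pos: "AE \<omega> in iid_law \<mu> p1. 0 < p1 (\<omega> i)"
proof -
  have "AE x in density \<mu> (\<lambda>x. ennreal (p1 x)). 0 < p1 x"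
    by (subst AE_density) (auto simp: ennreal_neg intro!: AE_I2)
  moreover have "obs_law 0 i = density \<mu> (\<lambda>x. ennreal (p1 x))"
    by (simp add: obs_law_def)
  ultimately have "AE x in obs_law 0 i. 0 < p1 x"
    by (simp only:)
  then show ?thesis
    unfolding iid_law_eq_PiM_obs_law by (rule AE_PiM_component[OF prob_space_obs_law UNIV_I])
qed

text \<open>The pre-change past \<open>F\<^sub>\<nu>\<^sub>-\<^sub>1\<close> is independent of the post-change future, whose law is
  the i.i.d. law, so conditioning on it does not change the expectation of a function of the future.\<close>
lemma esssup_nn_cond_exp_le_iid:
  assumes \<nu>: "1 \<le> \<nu>" and g [measurable]: "g \<in> borel_measurable (iid_law \<mu> p1)"
    and f_le: "\<And>\<omega>. f \<omega> \<le> g (\<lambda>n. \<omega> (n + \<nu>))"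
  shows "esssup (law \<mu> p0 p1 \<nu>) (nn_cond_exp (law \<mu> p0 p1 \<nu>) (filt \<mu> (law \<mu> p0 p1 \<nu>) (\<nu> - 1)) f)
    \<le> (\<integral>\<^sup>+y. g y \<partial>iid_law \<mu> p1)"
proof -
  let ?P = "law \<mu> p0 p1 \<nu>" and ?F = "filt \<mu> (law \<mu> p0 p1 \<nu>) (\<nu> - 1)"
  define c where "c = (\<integral>\<^sup>+y. g y \<partial>iid_law \<mu> p1)"
  interpret prob_space ?P by (rule prob_space_law)
  have "subalgebra ?P ?F"
    using sets_filt_subset[of "obs_law \<nu>" \<mu>]
    by (simp add: subalgebra_def space_filt law_eq_PiM_obs_law)
  then interpret F: sigma_finite_subalgebra ?P ?F
    by (intro finite_measure_subalgebra_is_sigma_finite)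
       (simp add: finite_measure_subalgebra_def finite_measure_subalgebra_axioms_def finite_measure_axioms)
  have [measurable]: "(\<lambda>\<omega>. g (\<lambda>n. \<omega> (n + \<nu>))) \<in> borel_measurable ?P"
    by (rule measurable_compose[OF measurable_shift g])
  have "AE \<omega> in ?P. c = nn_cond_exp ?P ?F (\<lambda>\<omega>. g (\<lambda>n. \<omega> (n + \<nu>))) \<omega>"
  proof (rule F.nn_cond_exp_charact)
    fix A assume A: "A \<in> sets ?F"
    then have "A \<in> sets ?P"
      using sets_filt_subset[of "obs_law \<nu>" \<mu>] by (auto simp: law_eq_PiM_obs_law)
    then show "(\<integral>\<^sup>+\<omega>\<in>A. g (\<lambda>n. \<omega> (n + \<nu>)) \<partial>?P) = (\<integral>\<^sup>+\<omega>\<in>A. c \<partial>?P)"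
      using set_nn_integral_filt_shift[OF \<nu> A g] nn_integral_cmult_indicator[of A ?P c]
      by (simp add: c_def mult.commute)
  qed simp_all
  moreover have "AE \<omega> in ?P. nn_cond_exp ?P ?F f \<omega> \<le> nn_cond_exp ?P ?F (\<lambda>\<omega>. g (\<lambda>n. \<omega> (n + \<nu>))) \<omega>"
  proof (cases "f \<in> borel_measurable ?P")
    case True
    then show ?thesis by (intro F.nn_cond_exp_mono AE_I2 f_le) simp_all
  qed (simp add: nn_cond_exp_def) \<comment> \<open>\<open>nn_cond_exp\<close> is \<open>0\<close> on non-measurable functions\<close>
  ultimately have "AE \<omega> in ?P. nn_cond_exp ?P ?F f \<omega> \<le> c"
    by eventually_elim simp
  then show ?thesis
    unfolding c_def by (rule esssup_I[OF borel_measurable_nn_cond_exp2])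
qed

end

section \<open>Blocks of the post-change sample\<close>

text \<open>Blocks live on the shifted sample \<open>y n = X\<^sub>n\<^sub>+\<^sub>\<nu>\<close>: block \<open>j\<close> is the window
  \<open>k = j L\<close>, \<open>n = j L + L - 1\<close> of the stopping statistic.\<close>
definition block_sum :: "('a list \<Rightarrow> 'a \<Rightarrow> real) \<Rightarrow> ('a \<Rightarrow> real) \<Rightarrow> nat \<Rightarrow> (nat \<Rightarrow> 'a) \<Rightarrow> nat \<Rightarrow> ereal" where
  "block_sum est p0 L y j = (\<Sum>i=j*L..j*L+L-1. Zhat est p0 y (j*L+L-1) (j*L) i)"

definition block_fails :: "('a list \<Rightarrow> 'a \<Rightarrow> real) \<Rightarrow> ('a \<Rightarrow> real) \<Rightarrow> nat \<Rightarrow> real \<Rightarrow> (nat \<Rightarrow> 'a) \<Rightarrow> nat \<Rightarrow> bool" where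
  "block_fails est p0 L b y j \<longleftrightarrow> block_sum est p0 L y j < ereal b"

text \<open>One plus the number of leading blocks that fail, i.e. the (1-based) index of the first
  block whose statistic reaches \<open>b\<close>, and \<open>\<infinity>\<close> if there is none.\<close>
definition blocks_until_success :: "('a list \<Rightarrow> 'a \<Rightarrow> real) \<Rightarrow> ('a \<Rightarrow> real) \<Rightarrow> nat \<Rightarrow> real \<Rightarrow> (nat \<Rightarrow> 'a) \<Rightarrow> ennreal" where
  "blocks_until_success est p0 L b y = (\<Sum>j. if \<forall>i<j. block_fails est p0 L b y i then 1 else 0)"

lemma blocks_until_success_ge:
  assumes "\<forall>i<j. block_fails est p0 L b y i"
  shows "of_nat (Suc j) \<le> blocks_until_success est p0 L b y"
proof -
  have "of_nat (Suc j) = (\<Sum>t<Suc j. (if \<forall>i<t. block_fails est p0 L b y i then 1 else 0 :: ennreal))"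
    using assms by simp
  also have "\<dots> \<le> blocks_until_success est p0 L b y"
    unfolding blocks_until_success_def by (rule sum_le_suminf) (auto intro: summableI)
  finally show ?thesis .
qed

lemma blocks_until_success_eq_top:
  assumes "\<forall>i. block_fails est p0 L b y i"
  shows "blocks_until_success est p0 L b y = \<top>"
proof (rule ccontr)
  assume "blocks_until_success est p0 L b y \<noteq> \<top>"
  then obtain n where "blocks_until_success est p0 L b y < of_nat n"
    using ennreal_Ex_less_of_nat top.not_eq_extremum by blast
  moreover have "of_nat (Suc n) \<le> blocks_until_success est p0 L b y"
    using assms by (intro blocks_until_success_ge) auto
  ultimately show False
    by (metis leD le_less_trans of_nat_le_iff le_SucI order_refl)
qed

lemma block_sum_shift:
  "block_sum est p0 L (\<lambda>n. \<omega> (n + s)) j = (\<Sum>i=j*L+s..j*L+L-1+s. Zhat est p0 \<omega> (j*L+L-1+s) (j*L+s) i)"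
  unfolding block_sum_def Zhat_shift
  using sum.shift_bounds_cl_nat_ivl[of "Zhat est p0 \<omega> (j*L+L-1+s) (j*L+s)" "j*L" s "j*L+L-1"] by simp

lemma block_fails_restrict:
  assumes "{j*L..j*L+L-1} \<subseteq> K"
  shows "block_fails est p0 L b (restrict y K) j = block_fails est p0 L b y j"
proof -
  have "block_sum est p0 L (restrict y K) j = block_sum est p0 L y j"
    unfolding block_sum_def by (intro sum.cong refl Zhat_cong) (use assms in auto)
  then show ?thesis unfolding block_fails_def by simp
qed

lemma block_subset_lessThan:
  fixes i j L :: nat
  assumes "i < j" "1 \<le> L"
  shows "{i*L..i*L+L-1} \<subseteq> {..<j*L}"
proof -
  have "Suc i * L \<le> j * L" using assms(1) by (intro mult_right_mono) auto
  then show ?thesis using assms(2) by auto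
qed

lemma leading_block_failures_restrict:
  assumes "1 \<le> L"
  shows "(\<forall>i<j. block_fails est p0 L b (restrict y {..<j*L}) i) = (\<forall>i<j. block_fails est p0 L b y i)"
  using block_fails_restrict[OF block_subset_lessThan[OF _ assms]] by blast

lemma stops_of_block_success:
  assumes "2 \<le> L" "L \<le> m" "1 \<le> s" and "\<not> block_fails est p0 L b (\<lambda>n. \<omega> (n + s)) j"
  shows "stops est p0 m b \<omega> (j*L+L-1+s)"
  unfolding stops_def
proof (intro exI conjI)
  show "j*L+L-1+s - m < j*L+s" "j*L+s \<le> j*L+L-1+s - 1"
    using assms(1-3) by auto
  show "ereal b \<le> (\<Sum>i=j*L+s..j*L+L-1+s. Zhat est p0 \<omega> (j*L+L-1+s) (j*L+s) i)"
    using assms(4) by (simp add: block_fails_def block_sum_shift not_less)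
qed

text \<open>The blocks of length \<open>L \<le> m\<close> after the change are disjoint windows admissible for the
  stopping rule, so the procedure stops at the latest at the end of the first successful block.\<close>
lemma delay_nglr_tau_le_blocks:
  assumes L: "2 \<le> L" "L \<le> m" and \<nu>: "1 \<le> \<nu>"
  shows "delay (nglr_tau est p0 m b \<omega>) \<nu> \<le> of_nat L * blocks_until_success est p0 L b (\<lambda>n. \<omega> (n + \<nu>))"
proof (cases "\<forall>j. block_fails est p0 L b (\<lambda>n. \<omega> (n + \<nu>)) j")
  case True
  then show ?thesis using blocks_until_success_eq_top[OF True] L by (simp add: ennreal_mult_top)
next
  case False
  define j where "j = (LEAST j. \<not> block_fails est p0 L b (\<lambda>n. \<omega> (n + \<nu>)) j)"
  have success: "\<not> block_fails est p0 L b (\<lambda>n. \<omega> (n + \<nu>)) j"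
    using False unfolding j_def by (metis (mono_tags) LeastI)
  have failures: "\<forall>i<j. block_fails est p0 L b (\<lambda>n. \<omega> (n + \<nu>)) i"
    unfolding j_def using not_less_Least by blast
  define n where "n = j*L+L-1+\<nu>"
  have stop: "1 < n \<and> stops est p0 m b \<omega> n"
    using stops_of_block_success[OF L \<nu> success] L \<nu> by (simp add: n_def)
  then have tau: "nglr_tau est p0 m b \<omega> = enat (LEAST n. 1 < n \<and> stops est p0 m b \<omega> n)"
    unfolding nglr_tau_def by auto
  have "(LEAST n. 1 < n \<and> stops est p0 m b \<omega> n) \<le> n"
    using stop by (rule Least_le)
  then have "delay (nglr_tau est p0 m b \<omega>) \<nu> \<le> of_nat (n + 1 - \<nu>)"
    unfolding tau delay_def by (simp add: ennreal_of_nat_eq_real_of_nat)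
  also have "n + 1 - \<nu> = L * Suc j"
    using L by (simp add: n_def algebra_simps)
  also have "of_nat (L * Suc j) \<le> of_nat L * blocks_until_success est p0 L b (\<lambda>n. \<omega> (n + \<nu>))"
    unfolding of_nat_mult by (intro mult_left_mono blocks_until_success_ge failures) auto
  finally show ?thesis .
qed

definition loo_llr_mean_square_rate ::
    "'a measure \<Rightarrow> ('a \<Rightarrow> real) \<Rightarrow> ('a list \<Rightarrow> 'a \<Rightarrow> real) \<Rightarrow> real \<Rightarrow> real \<Rightarrow> nat \<Rightarrow> bool" where
  "loo_llr_mean_square_rate \<mu> p1 est \<beta> C N \<longleftrightarrow>
     (\<forall>n k. 1 \<le> k \<and> k \<le> n \<and> N \<le> n - k \<longrightarrow>
           (\<integral>\<^sup>+ \<omega>. e2ennreal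
               (let S = ereal (1 / real (n - k + 1)) *
                        (\<Sum>i=k..n. llr (p1 (\<omega> i)) (loo_est est \<omega> n k i (\<omega> i)))
                in S * S) \<partial>iid_law \<mu> p1)
              \<le> ennreal (C / real (n - k + 1) powr \<beta>))"

locale nglr_model = change_point_model +
  fixes est :: "'a list \<Rightarrow> 'a \<Rightarrow> real"
  assumes est_density: "\<And>xs. is_density \<mu> (est xs)"
    and est_measurable: "\<And>L. (\<lambda>(f, x). est (map f [0..<L]) x)
                          \<in> borel_measurable ((\<Pi>\<^sub>M j\<in>{0..<L}. \<mu>) \<Otimes>\<^sub>M \<mu>)"
begin

lemma measurable_loo_est:
  assumes M: "\<And>j. sets (M j) = sets \<mu>" and K: "{k..n} \<subseteq> K" and i: "i \<in> {k..n}"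
  shows "(\<lambda>x. loo_est est x n k i (x i)) \<in> borel_measurable (PiM K M)"
proof -
  define idx where "idx = [k..<i] @ [Suc i..<Suc n]"
  define len where "len = length idx"
  have "set idx \<subseteq> K"
    using K i unfolding idx_def by auto
  then have idx_K: "idx ! j \<in> K" if "j < len" for j
    using that nth_mem[of j idx] unfolding len_def by blast
  have component: "(\<lambda>x. x j) \<in> measurable (PiM K M) \<mu>" if "j \<in> K" for j
    using measurable_component_singleton[OF that, of M] M by (simp cong: measurable_cong_sets)
  have pair: "(\<lambda>x. (restrict (\<lambda>j. x (idx ! j)) {0..<len}, x i))
      \<in> measurable (PiM K M) ((PiM {0..<len} (\<lambda>_. \<mu>)) \<Otimes>\<^sub>M \<mu>)"
    using i K by (intro measurable_Pair measurable_restrict component idx_K) auto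
  have "loo_est est x n k i (x i)
      = (\<lambda>(f, y). est (map f [0..<len]) y) (restrict (\<lambda>j. x (idx ! j)) {0..<len}, x i)" for x
  proof -
    have "map (restrict (\<lambda>j. x (idx ! j)) {0..<len}) [0..<len] = map (\<lambda>j. x (idx ! j)) [0..<len]"
      by (auto simp: restrict_def)
    also have "\<dots> = map x (map ((!) idx) [0..<length idx])"
      unfolding len_def by simp
    also have "\<dots> = map x idx"
      by (simp only: map_nth)
    finally show ?thesis
      by (simp add: loo_est_def idx_def)
  qed
  then show ?thesis
    by (simp only: measurable_compose[OF pair est_measurable])
qed

lemma measurable_Zhat:
  assumes M: "\<And>j. sets (M j) = sets \<mu>" and K: "{k..n} \<subseteq> K" and i: "i \<in> {k..n}"
  shows "(\<lambda>x. Zhat est p0 x n k i) \<in> borel_measurable (PiM K M)"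
proof -
  have [measurable]: "(\<lambda>x. x i) \<in> measurable (PiM K M) \<mu>"
    using measurable_component_singleton[of i K M] M K i by (auto cong: measurable_cong_sets)
  have [measurable]: "(\<lambda>x. loo_est est x n k i (x i)) \<in> borel_measurable (PiM K M)"
    by (rule measurable_loo_est[OF M K i])
  show ?thesis unfolding Zhat_def by measurable
qed

lemma measurable_block_sum:
  assumes "\<And>j. sets (M j) = sets \<mu>" and "{j*L..j*L+L-1} \<subseteq> K"
  shows "(\<lambda>y. block_sum est p0 L y j) \<in> borel_measurable (PiM K M)"
  unfolding block_sum_def
  by (rule borel_measurable_ereal_sum, rule measurable_Zhat[OF assms]) auto

lemma pred_block_fails:
  assumes "\<And>j. sets (M j) = sets \<mu>" and "{j*L..j*L+L-1} \<subseteq> K"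
  shows "Measurable.pred (PiM K M) (\<lambda>y. block_fails est p0 L b y j)"
  using measurable_block_sum[OF assms] unfolding block_fails_def by measurable

lemma pred_leading_block_failures:
  assumes "\<And>j. sets (M j) = sets \<mu>" and "1 \<le> L"
  shows "Measurable.pred (PiM {..<j*L} M) (\<lambda>y. \<forall>i<j. block_fails est p0 L b y i)"
proof -
  have "Measurable.pred (PiM {..<j*L} M) (\<lambda>y. \<forall>i\<in>{..<j}. block_fails est p0 L b y i)"
  proof (rule pred_intros_finite(3))
    fix i assume "i \<in> {..<j}"
    then have "{i*L..i*L+L-1} \<subseteq> {..<j*L}"
      using block_subset_lessThan[OF _ assms(2)] by blast
    then show "Measurable.pred (PiM {..<j*L} M) (\<lambda>y. block_fails est p0 L b y i)"
      by (rule pred_block_fails[OF assms(1)])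
  qed simp
  then show ?thesis by (simp only: Ball_def lessThan_iff)
qed

lemma measurable_blocks_until_success:
  assumes "\<And>j. sets (M j) = sets \<mu>"
  shows "blocks_until_success est p0 L b \<in> borel_measurable (PiM UNIV M)"
proof -
  have [measurable]: "Measurable.pred (PiM UNIV M) (\<lambda>y. block_fails est p0 L b y j)" for j
    by (rule pred_block_fails[OF assms]) auto
  have "(\<lambda>y. blocks_until_success est p0 L b y) \<in> borel_measurable (PiM UNIV M)"
    unfolding blocks_until_success_def by measurable
  then show ?thesis by simp
qed

lemma WADD_nglr_tau_le:
  assumes L: "2 \<le> L" "L \<le> m"
  shows "WADD \<mu> p0 p1 (nglr_tau est p0 m b)
    \<le> of_nat L * (\<integral>\<^sup>+y. blocks_until_success est p0 L b y \<partial>iid_law \<mu> p1)"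
  unfolding WADD_def
proof (rule SUP_least)
  have measurable_blocks: "blocks_until_success est p0 L b \<in> borel_measurable (iid_law \<mu> p1)"
    unfolding iid_law_eq_PiM_obs_law by (rule measurable_blocks_until_success) simp
  fix \<nu> :: nat assume "\<nu> \<in> {1..}"
  then have \<nu>: "1 \<le> \<nu>" by simp
  have "esssup (law \<mu> p0 p1 \<nu>) (nn_cond_exp (law \<mu> p0 p1 \<nu>) (filt \<mu> (law \<mu> p0 p1 \<nu>) (\<nu> - 1))
      (\<lambda>\<omega>. delay (nglr_tau est p0 m b \<omega>) \<nu>))
    \<le> (\<integral>\<^sup>+y. of_nat L * blocks_until_success est p0 L b y \<partial>iid_law \<mu> p1)"
  proof (rule esssup_nn_cond_exp_le_iid[OF \<nu>])
    show "(\<lambda>y. of_nat L * blocks_until_success est p0 L b y) \<in> borel_measurable (iid_law \<mu> p1)"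
      using measurable_blocks by (rule borel_measurable_times_ennreal[OF borel_measurable_const])
    show "delay (nglr_tau est p0 m b \<omega>) \<nu> \<le> of_nat L * blocks_until_success est p0 L b (\<lambda>n. \<omega> (n + \<nu>))" for \<omega>
      by (rule delay_nglr_tau_le_blocks[OF L \<nu>])
  qed
  also have "\<dots> = of_nat L * (\<integral>\<^sup>+y. blocks_until_success est p0 L b y \<partial>iid_law \<mu> p1)"
    using measurable_blocks by (rule nn_integral_cmult)
  finally show "esssup (law \<mu> p0 p1 \<nu>) (nn_cond_exp (law \<mu> p0 p1 \<nu>) (filt \<mu> (law \<mu> p0 p1 \<nu>) (\<nu> - 1))
      (\<lambda>\<omega>. delay (nglr_tau est p0 m b \<omega>) \<nu>))
    \<le> of_nat L * (\<integral>\<^sup>+y. blocks_until_success est p0 L b y \<partial>iid_law \<mu> p1)" .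
qed

text \<open>Disjoint blocks are independent under the i.i.d. law.\<close>
lemma emeasure_leading_block_failures_le:
  assumes L: "1 \<le> L" and q: "0 \<le> q"
    and fails_le: "\<And>j. emeasure (iid_law \<mu> p1) {y \<in> space (iid_law \<mu> p1). block_fails est p0 L b y j} \<le> ennreal q"
  shows "emeasure (iid_law \<mu> p1) {y \<in> space (iid_law \<mu> p1). \<forall>i<j. block_fails est p0 L b y i} \<le> ennreal (q ^ j)"
proof (induction j)
  case 0
  have "emeasure (iid_law \<mu> p1) (space (iid_law \<mu> p1)) = 1"
    using prob_space_iid_law by (rule prob_space.emeasure_space_1)
  then show ?case by simp
next
  case (Suc j)
  have "{y \<in> space (iid_law \<mu> p1). \<forall>i<Suc j. block_fails est p0 L b y i}
      = {y \<in> space (iid_law \<mu> p1). (\<forall>i<j. block_fails est p0 L b y i) \<and> block_fails est p0 L b y j}"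
    using less_Suc_eq by auto
  also have "emeasure (iid_law \<mu> p1) \<dots>
    = emeasure (iid_law \<mu> p1) {y \<in> space (iid_law \<mu> p1). \<forall>i<j. block_fails est p0 L b y i}
      * emeasure (iid_law \<mu> p1) {y \<in> space (iid_law \<mu> p1). block_fails est p0 L b y j}"
    unfolding iid_law_eq_PiM_obs_law
  proof (rule emeasure_PiM_conj_indep[OF prob_space_obs_law])
    show "Measurable.pred (PiM {..<j*L} (obs_law 0)) (\<lambda>y. \<forall>i<j. block_fails est p0 L b y i)"
      by (rule pred_leading_block_failures) (use L in auto)
    show "Measurable.pred (PiM {j*L..} (obs_law 0)) (\<lambda>y. block_fails est p0 L b y j)"
      by (rule pred_block_fails) auto
    show "block_fails est p0 L b (restrict y {j*L..}) j = block_fails est p0 L b y j" for y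
      by (rule block_fails_restrict) auto
    show "(\<forall>i<j. block_fails est p0 L b (restrict y {..<j*L}) i) = (\<forall>i<j. block_fails est p0 L b y i)" for y
      by (rule leading_block_failures_restrict[OF L])
  qed auto
  also have "\<dots> \<le> ennreal (q ^ j) * ennreal q"
    using Suc.IH fails_le by (intro mult_mono) auto
  also have "\<dots> = ennreal (q ^ Suc j)"
    using q by (subst power_Suc2, subst ennreal_mult) auto
  finally show ?case .
qed

lemma nn_integral_blocks_until_success_le:
  assumes L: "1 \<le> L" and q: "0 \<le> q" "q < 1"
    and fails_le: "\<And>j. emeasure (iid_law \<mu> p1) {y \<in> space (iid_law \<mu> p1). block_fails est p0 L b y j} \<le> ennreal q"
  shows "(\<integral>\<^sup>+y. blocks_until_success est p0 L b y \<partial>iid_law \<mu> p1) \<le> ennreal (1 / (1 - q))"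
proof -
  let ?D = "\<lambda>j. {y \<in> space (iid_law \<mu> p1). \<forall>i<j. block_fails est p0 L b y i}"
  have D_sets: "?D j \<in> sets (iid_law \<mu> p1)" for j
  proof -
    have "Measurable.pred (PiM UNIV (obs_law 0)) (\<lambda>y. \<forall>i<j. block_fails est p0 L b (restrict y {..<j*L}) i)"
      by (rule measurable_compose[OF measurable_restrict_subset[OF subset_UNIV]
            pred_leading_block_failures[OF sets_obs_law L]])
    then show ?thesis
      unfolding leading_block_failures_restrict[OF L] iid_law_eq_PiM_obs_law by (simp only: pred_def)
  qed
  have "(\<integral>\<^sup>+y. blocks_until_success est p0 L b y \<partial>iid_law \<mu> p1) = (\<integral>\<^sup>+y. (\<Sum>j. indicator (?D j) y) \<partial>iid_law \<mu> p1)"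
    by (intro nn_integral_cong) (simp add: blocks_until_success_def indicator_def of_bool_def)
  also have "\<dots> = (\<Sum>j. \<integral>\<^sup>+y. indicator (?D j) y \<partial>iid_law \<mu> p1)"
    by (rule nn_integral_suminf) (rule borel_measurable_indicator[OF D_sets])
  also have "\<dots> = (\<Sum>j. emeasure (iid_law \<mu> p1) (?D j))"
    by (simp only: nn_integral_indicator[OF D_sets])
  also have "\<dots> \<le> (\<Sum>j. ennreal (q ^ j))"
    by (intro suminf_le emeasure_leading_block_failures_le L q fails_le) auto
  also have "\<dots> = ennreal (1 / (1 - q))"
    using q by (simp add: suminf_ennreal2 suminf_geometric)
  finally show ?thesis .
qed

lemma AE_block_fails_imp_llr_sum_le_or_remainder_ge:
  assumes L: "2 \<le> L" and \<delta>: "0 < \<delta>" and ab: "b + \<delta> * real L \<le> a"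
    and k: "k = j*L+1" and n: "n = j*L+L"
  shows "AE \<omega> in iid_law \<mu> p1. block_fails est p0 L b (\<lambda>t. \<omega> (t + 1)) j \<longrightarrow>
    (\<Sum>i=k..n. llr (p1 (\<omega> i)) (p0 (\<omega> i))) \<le> ereal a \<or>
    ereal (\<delta>\<^sup>2) \<le> (ereal (1 / real L) * (\<Sum>i=k..n. llr (p1 (\<omega> i)) (loo_est est \<omega> n k i (\<omega> i))))
                 * (ereal (1 / real L) * (\<Sum>i=k..n. llr (p1 (\<omega> i)) (loo_est est \<omega> n k i (\<omega> i))))"
proof -
  have "AE \<omega> in iid_law \<mu> p1. \<forall>i\<in>{k..n}. 0 < p1 (\<omega> i)"
    by (rule eventually_ball_finite) (auto intro: AE_iid_law_p1_pos)
  with AE_space show ?thesis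
  proof eventually_elim
    case (elim \<omega>)
    define SZ where "SZ = (\<Sum>i=k..n. llr (p1 (\<omega> i)) (p0 (\<omega> i)))"
    define S where "S = ereal (1 / real L) * (\<Sum>i=k..n. llr (p1 (\<omega> i)) (loo_est est \<omega> n k i (\<omega> i)))"
    have space: "\<omega> i \<in> space \<mu>" for i
      using measurable_space[OF measurable_iid_law_component elim(1)] .
    have "ereal b \<le> (\<Sum>i=k..n. Zhat est p0 \<omega> n k i)" if "ereal a < SZ" and "S * S < ereal (\<delta>\<^sup>2)"
      unfolding Zhat_def
      by (rule sum_llr_ge_of_small_remainder[OF _ _ \<delta> ab _ _ _ that(2)[unfolded S_def] that(1)[unfolded SZ_def]])
         (use L elim(2) space est_density density_p0 in \<open>auto simp: is_density_def loo_est_def\<close>)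
    moreover have "block_fails est p0 L b (\<lambda>t. \<omega> (t + 1)) j \<longleftrightarrow> (\<Sum>i=k..n. Zhat est p0 \<omega> n k i) < ereal b"
      using L block_sum_shift[of est p0 L \<omega> 1 j] by (simp add: block_fails_def k n)
    ultimately have "block_fails est p0 L b (\<lambda>t. \<omega> (t + 1)) j \<longrightarrow> SZ \<le> ereal a \<or> ereal (\<delta>\<^sup>2) \<le> S * S"
      by (auto simp: not_le[symmetric])
    then show ?case
      unfolding SZ_def S_def .
  qed
qed

lemma measurable_loo_llr_sum:
  "(\<lambda>\<omega>. \<Sum>i=k..n. llr (p1 (\<omega> i)) (loo_est est \<omega> n k i (\<omega> i))) \<in> borel_measurable (iid_law \<mu> p1)"
proof (rule borel_measurable_ereal_sum)
  fix i assume "i \<in> {k..n}"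
  then have [measurable]: "(\<lambda>\<omega>. loo_est est \<omega> n k i (\<omega> i)) \<in> borel_measurable (iid_law \<mu> p1)"
    unfolding iid_law_eq_PiM_obs_law by (intro measurable_loo_est) auto
  show "(\<lambda>\<omega>. llr (p1 (\<omega> i)) (loo_est est \<omega> n k i (\<omega> i))) \<in> borel_measurable (iid_law \<mu> p1)"
    by measurable
qed

lemma emeasure_block_fails_le:
  assumes L: "2 \<le> L" and \<delta>: "0 < \<delta>" and ab: "b + \<delta> * real L \<le> a" and B: "0 \<le> B"
    and k: "k = j*L+1" and n: "n = j*L+L"
    and rate: "(\<integral>\<^sup>+\<omega>. e2ennreal
               (let S = ereal (1 / real (n - k + 1)) *
                        (\<Sum>i=k..n. llr (p1 (\<omega> i)) (loo_est est \<omega> n k i (\<omega> i)))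
                in S * S) \<partial>iid_law \<mu> p1) \<le> ennreal B"
  shows "emeasure (iid_law \<mu> p1) {y \<in> space (iid_law \<mu> p1). block_fails est p0 L b y j}
    \<le> emeasure (law \<mu> p0 p1 1) {\<omega> \<in> space (law \<mu> p0 p1 1).
          (\<Sum>i=k..k+(L-1). llr (p1 (\<omega> i)) (p0 (\<omega> i))) \<le> ereal a}
      + ennreal (B / \<delta>\<^sup>2)"
proof -
  let ?P = "iid_law \<mu> p1"
  interpret P: prob_space ?P by (rule prob_space_iid_law)
  define SZ where "SZ \<omega> = (\<Sum>i=k..n. llr (p1 (\<omega> i)) (p0 (\<omega> i)))" for \<omega>
  define S where "S \<omega> = ereal (1 / real L) * (\<Sum>i=k..n. llr (p1 (\<omega> i)) (loo_est est \<omega> n k i (\<omega> i)))" for \<omega>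
  have nk: "n - k + 1 = L" "k + (L - 1) = n" "k \<le> n"
    using L k n by auto
  note measurable_loo_llr_sum[measurable]
  have [measurable]: "S \<in> borel_measurable ?P" "SZ \<in> borel_measurable ?P"
    unfolding S_def[abs_def] SZ_def[abs_def] by measurable
  have fails: "Measurable.pred ?P (\<lambda>y. block_fails est p0 L b y j)"
    unfolding iid_law_eq_PiM_obs_law by (rule pred_block_fails) auto
  have "emeasure ?P {y \<in> space ?P. block_fails est p0 L b y j}
      = emeasure ?P {\<omega> \<in> space ?P. block_fails est p0 L b (\<lambda>t. \<omega> (t + 1)) j}"
    using emeasure_law_shift[of 0 1, OF _ fails] by (simp add: iid_law_eq_law_0[symmetric])
  also have "\<dots> \<le> emeasure ?P ({\<omega> \<in> space ?P. SZ \<omega> \<le> ereal a} \<union> {\<omega> \<in> space ?P. ereal (\<delta>\<^sup>2) \<le> S \<omega> * S \<omega>})"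
    using AE_block_fails_imp_llr_sum_le_or_remainder_ge[OF L \<delta> ab k n] AE_space
    by (intro emeasure_mono_AE) (auto simp: SZ_def S_def)
  also have "\<dots> \<le> emeasure ?P {\<omega> \<in> space ?P. SZ \<omega> \<le> ereal a} + emeasure ?P {\<omega> \<in> space ?P. ereal (\<delta>\<^sup>2) \<le> S \<omega> * S \<omega>}"
    by (rule emeasure_subadditive) measurable
  also have "emeasure ?P {\<omega> \<in> space ?P. SZ \<omega> \<le> ereal a}
      = emeasure (law \<mu> p0 p1 1) {\<omega> \<in> space (law \<mu> p0 p1 1). (\<Sum>i=k..k+(L-1). llr (p1 (\<omega> i)) (p0 (\<omega> i))) \<le> ereal a}"
    using emeasure_llr_sum_le_eq[of 0 k 1 n a] k nk by (simp add: SZ_def iid_law_eq_law_0[symmetric])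
  also have "emeasure ?P {\<omega> \<in> space ?P. ereal (\<delta>\<^sup>2) \<le> S \<omega> * S \<omega>} \<le> ennreal (B / \<delta>\<^sup>2)"
  proof (rule P.emeasure_square_ge_le)
    show "(\<integral>\<^sup>+\<omega>. e2ennreal (S \<omega> * S \<omega>) \<partial>?P) \<le> ennreal B"
      using rate[unfolded nk(1) Let_def] by (simp only: S_def)
  qed (use \<delta> B in simp_all)
  finally show ?thesis
    by (simp add: add_left_mono)
qed

lemma WADD_nglr_tau_le_of_block_fails:
  assumes L: "2 \<le> L" "L \<le> m" and q: "0 \<le> q" "q < 1"
    and fails_le: "\<And>j. emeasure (iid_law \<mu> p1) {y \<in> space (iid_law \<mu> p1). block_fails est p0 L b y j} \<le> ennreal q"
  shows "WADD \<mu> p0 p1 (nglr_tau est p0 m b) \<le> ennreal (real L / (1 - q))"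
proof -
  have "WADD \<mu> p0 p1 (nglr_tau est p0 m b) \<le> of_nat L * (\<integral>\<^sup>+y. blocks_until_success est p0 L b y \<partial>iid_law \<mu> p1)"
    by (rule WADD_nglr_tau_le[OF L])
  also have "\<dots> \<le> ennreal (real L) * ennreal (1 / (1 - q))"
    using L q fails_le by (auto intro!: mult_left_mono nn_integral_blocks_until_success_le simp: ennreal_of_nat_eq_real_of_nat)
  also have "\<dots> = ennreal (real L / (1 - q))"
    using q by (simp add: ennreal_mult[symmetric])
  finally show ?thesis .
qed

lemma eventually_emeasure_block_fails_le:
  assumes \<delta>: "0 < \<delta>" and q: "0 < q"
    and concentration: "(\<lambda>n. SUP t\<in>{1..}. measure (law \<mu> p0 p1 1) {\<omega> \<in> space (law \<mu> p0 p1 1).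
              (\<Sum>i=t..t+n. llr (p1 (\<omega> i)) (p0 (\<omega> i))) \<le> ereal ((1 - \<delta>) * real n * I)}) \<longlonglongrightarrow> 0"
    and \<beta>: "0 < \<beta>" and C: "0 \<le> C"
    and rate: "loo_llr_mean_square_rate \<mu> p1 est \<beta> C N"
  shows "\<forall>\<^sub>F L in sequentially. 2 \<le> L \<and> (\<forall>b j. b + \<delta> * real L \<le> (1 - \<delta>) * real (L - 1) * I \<longrightarrow>
           emeasure (iid_law \<mu> p1) {y \<in> space (iid_law \<mu> p1). block_fails est p0 L b y j} \<le> ennreal q)"
proof -
  define g where "g n = (SUP t\<in>{1..}. measure (law \<mu> p0 p1 1) {\<omega> \<in> space (law \<mu> p0 p1 1).
              (\<Sum>i=t..t+n. llr (p1 (\<omega> i)) (p0 (\<omega> i))) \<le> ereal ((1 - \<delta>) * real n * I)})" for n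
  interpret P1: prob_space "law \<mu> p0 p1 1" by (rule prob_space_law)
  have "\<forall>\<^sub>F n in sequentially. g n < q / 2"
    using order_tendstoD(2)[OF concentration[folded g_def], of "q / 2"] q by simp
  then obtain n1 where "\<And>n. n1 \<le> n \<Longrightarrow> g n < q / 2"
    by (auto simp: eventually_sequentially)
  then have concentration_small: "\<forall>\<^sub>F L in sequentially. g (L - 1) < q / 2"
    unfolding eventually_sequentially by (intro exI[of _ "Suc n1"]) auto
  have "\<forall>\<^sub>F L in sequentially. C / \<delta>\<^sup>2 / real L powr \<beta> < q / 2"
    using \<beta> q by (intro eventually_div_powr_less) auto
  then have rate_small: "\<forall>\<^sub>F L in sequentially. C / real L powr \<beta> / \<delta>\<^sup>2 < q / 2"
    by eventually_elim (simp add: divide_divide_eq_left mult.commute)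
  from concentration_small rate_small eventually_ge_at_top[of "N + 2"]
  show ?thesis
  proof eventually_elim
    case (elim L)
    show ?case
    proof (intro conjI allI impI)
      show "2 \<le> L" using elim(3) by simp
      fix b j assume ab: "b + \<delta> * real L \<le> (1 - \<delta>) * real (L - 1) * I"
      have kn: "(j*L+L) - (j*L+1) + 1 = L" "1 \<le> j*L+1" "j*L+1 \<le> j*L+L" "N \<le> (j*L+L) - (j*L+1)"
        using elim(3) by auto
      have "emeasure (iid_law \<mu> p1) {y \<in> space (iid_law \<mu> p1). block_fails est p0 L b y j}
        \<le> emeasure (law \<mu> p0 p1 1) {\<omega> \<in> space (law \<mu> p0 p1 1).
              (\<Sum>i=j*L+1..j*L+1+(L-1). llr (p1 (\<omega> i)) (p0 (\<omega> i))) \<le> ereal ((1 - \<delta>) * real (L - 1) * I)}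
          + ennreal (C / real L powr \<beta> / \<delta>\<^sup>2)"
        using emeasure_block_fails_le[OF _ \<delta> _ _ refl refl rate[unfolded loo_llr_mean_square_rate_def, rule_format, OF conjI[OF kn(2) conjI[OF kn(3-4)]]]]
          elim(3) ab \<delta> C
        by (simp only: kn(1)) simp
      also have "\<dots> \<le> ennreal (g (L - 1)) + ennreal (C / real L powr \<beta> / \<delta>\<^sup>2)"
        unfolding g_def by (intro add_right_mono P1.emeasure_le_SUP_measure) simp
      also have "\<dots> \<le> ennreal (q / 2) + ennreal (q / 2)"
        using elim(1,2) by (intro add_mono ennreal_leI) auto
      also have "\<dots> = ennreal q"
        using q by (simp add: ennreal_plus[symmetric] del: ennreal_plus)
      finally show "emeasure (iid_law \<mu> p1) {y \<in> space (iid_law \<mu> p1). block_fails est p0 L b y j} \<le> ennreal q" .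
    qed
  qed
qed

end

section \<open>Choice of the block length\<close>

lemma block_length_margin:
  fixes I \<epsilon>1 \<delta> b :: real
  assumes I: "0 < I" and \<epsilon>1: "0 < \<epsilon>1" and \<delta>: "0 \<le> \<delta>" "\<delta> * (I + 1) \<le> I * \<epsilon>1 / (2 * (1 + \<epsilon>1))"
    and b: "2 * I / \<epsilon>1 \<le> b" and L: "(1 + \<epsilon>1) * b / I \<le> real L"
  shows "b + \<delta> * real L \<le> (1 - \<delta>) * real (L - 1) * I"
proof -
  have "I * (2 + \<epsilon>1) / (2 * (1 + \<epsilon>1)) = I - I * \<epsilon>1 / (2 * (1 + \<epsilon>1))"
    using \<epsilon>1 by (simp add: field_simps)
  also have "\<dots> \<le> (1 - \<delta>) * I - \<delta>"
    using \<delta>(2) by (simp add: algebra_simps)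
  finally have rate: "I * (2 + \<epsilon>1) / (2 * (1 + \<epsilon>1)) \<le> (1 - \<delta>) * I - \<delta>" .
  have "b + I \<le> b + b * \<epsilon>1 / 2"
    using b I \<epsilon>1 by (simp add: field_simps)
  also have "\<dots> = (1 + \<epsilon>1) * b / I * (I * (2 + \<epsilon>1) / (2 * (1 + \<epsilon>1)))"
  proof -
    have "I \<noteq> 0" "1 + \<epsilon>1 \<noteq> 0" using I \<epsilon>1 by auto
    then show ?thesis by (simp add: divide_simps) (simp add: algebra_simps)
  qed
  also have "\<dots> \<le> real L * ((1 - \<delta>) * I - \<delta>)"
    using L rate I \<epsilon>1 b by (intro mult_mono) (auto simp: zero_le_divide_iff)
  finally have "b + I \<le> real L * ((1 - \<delta>) * I - \<delta>)" .
  moreover have "1 \<le> L"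
  proof -
    have "0 < b" using b I \<epsilon>1 by (smt (verit) divide_pos_pos)
    then have "0 < (1 + \<epsilon>1) * b / I" using I \<epsilon>1 by simp
    then show ?thesis using L by simp
  qed
  moreover have "(1 - \<delta>) * I \<le> I"
    using \<delta> I by simp
  ultimately show ?thesis
    by (simp add: of_nat_diff algebra_simps)
qed

lemma block_length_ratio:
  fixes \<epsilon> \<epsilon>1 I b :: real
  assumes \<epsilon>: "0 < \<epsilon>" and \<epsilon>1: "\<epsilon>1 \<le> \<epsilon> / 3" and I: "0 < I" and b: "3 * I / \<epsilon> \<le> b"
    and L: "real L < (1 + \<epsilon>1) * b / I + 1"
  shows "real L / (1 - \<epsilon> / (3 * (1 + \<epsilon>))) \<le> (1 + \<epsilon>) * b / I"
proof -
  have "1 \<le> \<epsilon> / 3 * (b / I)"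
    using b \<epsilon> I by (simp add: field_simps)
  then have "real L \<le> (1 + \<epsilon> / 3) * (b / I) + \<epsilon> / 3 * (b / I)"
    using L \<epsilon>1 b I \<epsilon> by (smt (verit) mult_right_mono times_divide_eq_right zero_le_divide_iff)
  also have "\<dots> = (1 - \<epsilon> / (3 * (1 + \<epsilon>))) * ((1 + \<epsilon>) * b / I)"
  proof -
    have "I \<noteq> 0" "1 + \<epsilon> \<noteq> 0" using I \<epsilon> by auto
    then show ?thesis by (simp add: divide_simps) (simp add: algebra_simps)
  qed
  finally have "real L \<le> (1 - \<epsilon> / (3 * (1 + \<epsilon>))) * ((1 + \<epsilon>) * b / I)" .
  moreover have "0 < 1 - \<epsilon> / (3 * (1 + \<epsilon>))"
    using \<epsilon> by (simp add: field_simps)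
  ultimately show ?thesis
    by (simp add: pos_divide_le_eq mult.commute)
qed

lemma admissible_block_length:
  fixes I \<epsilon> \<epsilon>1 \<delta> b :: real and K M :: nat
  assumes I: "0 < I" and \<epsilon>: "0 < \<epsilon>" and \<epsilon>1: "0 < \<epsilon>1" "\<epsilon>1 \<le> \<epsilon> / 3"
    and \<delta>: "0 \<le> \<delta>" "\<delta> * (I + 1) \<le> I * \<epsilon>1 / (2 * (1 + \<epsilon>1))"
    and b: "max (2 * I / \<epsilon>1) (max (3 * I / \<epsilon>) (I * real K)) \<le> b"
    and window: "(1 + \<epsilon>1) / I < real M / b"
  defines "L \<equiv> nat \<lceil>(1 + \<epsilon>1) * b / I\<rceil>"
  shows "K \<le> L" "L \<le> M" "b + \<delta> * real L \<le> (1 - \<delta>) * real (L - 1) * I"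
    "real L / (1 - \<epsilon> / (3 * (1 + \<epsilon>))) \<le> (1 + \<epsilon>) * b / I"
proof -
  have b': "2 * I / \<epsilon>1 \<le> b" "3 * I / \<epsilon> \<le> b" "I * real K \<le> b"
    using b by auto
  have b_pos: "0 < b"
    using less_le_trans[OF divide_pos_pos b'(1)] I \<epsilon>1 by simp
  then have "0 < (1 + \<epsilon>1) * b / I"
    using I \<epsilon>1 by simp
  then have L: "(1 + \<epsilon>1) * b / I \<le> real L" "real L < (1 + \<epsilon>1) * b / I + 1"
    unfolding L_def by linarith+
  have "real K \<le> (1 + \<epsilon>1) * b / I"
    using b' I \<epsilon>1 by (simp add: field_simps)
  then show "K \<le> L"
    using L by linarith
  show "L \<le> M"
    using window b_pos I unfolding L_def by (simp add: field_simps nat_le_iff ceiling_le_iff)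
  show "b + \<delta> * real L \<le> (1 - \<delta>) * real (L - 1) * I"
    using \<delta> b'(1) L(1) by (intro block_length_margin[OF I \<epsilon>1(1)]) auto
  show "real L / (1 - \<epsilon> / (3 * (1 + \<epsilon>))) \<le> (1 + \<epsilon>) * b / I"
    by (rule block_length_ratio[OF \<epsilon> \<epsilon>1(2) I b'(2) L(2)])
qed

lemma eventually_admissible_block_length:
  fixes I \<eta> \<epsilon> :: real and m :: "real \<Rightarrow> nat"
  assumes I: "0 < I" and \<eta>: "1 < \<eta>" and \<epsilon>: "0 < \<epsilon>"
    and window: "Liminf at_top (\<lambda>b. ereal (real (m b) / b)) \<ge> ereal (\<eta> / I)"
  obtains \<delta> q where "0 < \<delta>" "\<delta> < 1" "0 < q" "q < 1"
    and "\<And>P. eventually P sequentially \<Longrightarrow> \<forall>\<^sub>F b in at_top. \<exists>L. P L \<and> L \<le> m b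
           \<and> b + \<delta> * real L \<le> (1 - \<delta>) * real (L - 1) * I \<and> real L / (1 - q) \<le> (1 + \<epsilon>) * b / I"
proof -
  define \<epsilon>1 where "\<epsilon>1 = min (\<epsilon> / 3) ((\<eta> - 1) / 2)"
  define \<delta> where "\<delta> = I / (I + 1) * (\<epsilon>1 / (2 * (1 + \<epsilon>1)))"
  have \<epsilon>1: "0 < \<epsilon>1" "\<epsilon>1 \<le> \<epsilon> / 3" "1 + \<epsilon>1 < \<eta>"
    using \<epsilon> \<eta> by (auto simp: \<epsilon>1_def min_def field_simps)
  have \<delta>_eq: "\<delta> * (I + 1) = I * \<epsilon>1 / (2 * (1 + \<epsilon>1))"
    using I unfolding \<delta>_def by simp
  have factors: "0 < I / (I + 1)" "I / (I + 1) < 1" "0 < \<epsilon>1 / (2 * (1 + \<epsilon>1))" "\<epsilon>1 / (2 * (1 + \<epsilon>1)) < 1"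
    using I \<epsilon>1 by simp_all
  have \<delta>: "0 < \<delta>" "\<delta> < 1"
    using mult_pos_pos[OF factors(1,3)] mult_strict_mono[OF factors(2,4) zero_less_one less_imp_le[OF factors(3)]]
    unfolding \<delta>_def by simp_all
  show ?thesis
  proof (rule that[OF \<delta>])
    show "0 < \<epsilon> / (3 * (1 + \<epsilon>))" "\<epsilon> / (3 * (1 + \<epsilon>)) < 1"
      using \<epsilon> by (simp_all add: field_simps)
    fix P :: "nat \<Rightarrow> bool" assume "eventually P sequentially"
    then obtain K where K: "\<And>L. K \<le> L \<Longrightarrow> P L" by (auto simp: eventually_sequentially)
    have "ereal ((1 + \<epsilon>1) / I) < ereal (\<eta> / I)"
      using \<epsilon>1(3) I by (simp add: divide_strict_right_mono)
    then have "ereal ((1 + \<epsilon>1) / I) < Liminf at_top (\<lambda>b. ereal (real (m b) / b))"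
      using window by (rule less_le_trans)
    from less_LiminfD[OF this] eventually_ge_at_top[of "max (2 * I / \<epsilon>1) (max (3 * I / \<epsilon>) (I * real K))"]
    show "\<forall>\<^sub>F b in at_top. \<exists>L. P L \<and> L \<le> m b \<and> b + \<delta> * real L \<le> (1 - \<delta>) * real (L - 1) * I
        \<and> real L / (1 - \<epsilon> / (3 * (1 + \<epsilon>))) \<le> (1 + \<epsilon>) * b / I"
    proof eventually_elim
      case (elim b)
      then have "(1 + \<epsilon>1) / I < real (m b) / b" by simp
      from admissible_block_length[OF I \<epsilon> \<epsilon>1(1,2) less_imp_le[OF \<delta>(1)] eq_refl[OF \<delta>_eq] elim(2) this]
      show ?case using K by blast
    qed
  qed
qed

theorem lemma3:
  fixes \<mu> :: "'a::euclidean_space measure"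
    and p0 p1 :: "'a \<Rightarrow> real"
    and est :: "'a list \<Rightarrow> 'a \<Rightarrow> real"
    and m :: "real \<Rightarrow> nat"
    and I \<eta> :: real
  assumes sets_mu: "sets \<mu> = sets borel"
    and dens0: "is_density \<mu> p0" and dens1: "is_density \<mu> p1"
    and est_dens: "\<And>xs. is_density \<mu> (est xs)"
    and est_meas: "\<And>L. (\<lambda>(f, x). est (map f [0..<L]) x)
                          \<in> borel_measurable ((\<Pi>\<^sub>M j\<in>{0..<L}. \<mu>) \<Otimes>\<^sub>M \<mu>)"
    and I_def: "KL \<mu> p1 p0 = ereal I" and I_pos: "0 < I"
    and eta: "1 < \<eta>"
    and window: "Liminf at_top (\<lambda>b. ereal (real (m b) / b)) \<ge> ereal (\<eta> / I)"
    and est_rates: "\<exists>\<beta>1 C1 \<beta>2 C2 N. 0 < \<beta>1 \<and> 0 < C1 \<and> 0 < \<beta>2 \<and> \<beta>2 < 2 \<and> 0 < C2 \<and>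
        (\<forall>n k i. 1 \<le> k \<and> k \<le> i \<and> i \<le> n \<and> N \<le> n - k \<longrightarrow>
           (\<integral>\<^sup>+ \<omega>. e2ennreal (KL \<mu> p1 (loo_est est \<omega> n k i)) \<partial>iid_law \<mu> p1)
              \<le> ennreal (C1 / real (n - k) powr \<beta>1)) \<and>
        (\<forall>n k. 1 \<le> k \<and> k \<le> n \<and> N \<le> n - k \<longrightarrow>
           (\<integral>\<^sup>+ \<omega>. e2ennreal
               (let S = ereal (1 / real (n - k + 1)) *
                        (\<Sum>i=k..n. llr (p1 (\<omega> i)) (loo_est est \<omega> n k i (\<omega> i)))
                in S * S) \<partial>iid_law \<mu> p1)
              \<le> ennreal (C2 / real (n - k + 1) powr \<beta>2))"
    and Z_concentration: "\<And>\<delta> \<nu>. 0 < \<delta> \<Longrightarrow> \<delta> < 1 \<Longrightarrow> 1 \<le> \<nu> \<Longrightarrow>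
        (\<lambda>n. SUP t\<in>{\<nu>..}. measure (law \<mu> p0 p1 \<nu>)
              {\<omega> \<in> space (law \<mu> p0 p1 \<nu>).
                 (\<Sum>i=t..t+n. llr (p1 (\<omega> i)) (p0 (\<omega> i))) \<le> ereal ((1 - \<delta>) * real n * I)})
        \<longlonglongrightarrow> 0"
  shows "\<forall>\<epsilon>>0. \<forall>\<^sub>F b in at_top.
           WADD \<mu> p0 p1 (nglr_tau est p0 (m b) b) \<le> ennreal ((1 + \<epsilon>) * b / I)"
proof (intro allI impI)
  fix \<epsilon> :: real assume \<epsilon>: "0 < \<epsilon>"
  interpret nglr_model \<mu> p0 p1 est
    using dens0 dens1 est_dens est_meas by unfold_locales
  obtain \<beta> C N where \<beta>: "0 < \<beta>" and C: "0 < C" and rate: "loo_llr_mean_square_rate \<mu> p1 est \<beta> C N"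
    using est_rates unfolding loo_llr_mean_square_rate_def by blast
  obtain \<delta> q where \<delta>: "0 < \<delta>" "\<delta> < 1" and q: "0 < q" "q < 1"
    and admissible: "\<And>P. eventually P sequentially \<Longrightarrow> \<forall>\<^sub>F b in at_top. \<exists>L. P L \<and> L \<le> m b
           \<and> b + \<delta> * real L \<le> (1 - \<delta>) * real (L - 1) * I \<and> real L / (1 - q) \<le> (1 + \<epsilon>) * b / I"
    using eventually_admissible_block_length[OF I_pos eta \<epsilon> window] by blast
  have "\<forall>\<^sub>F L in sequentially. 2 \<le> L \<and> (\<forall>b j. b + \<delta> * real L \<le> (1 - \<delta>) * real (L - 1) * I \<longrightarrow>
           emeasure (iid_law \<mu> p1) {y \<in> space (iid_law \<mu> p1). block_fails est p0 L b y j} \<le> ennreal q)"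
    using C by (intro eventually_emeasure_block_fails_le[OF \<delta>(1) q(1) Z_concentration[OF \<delta> order_refl] \<beta> _ rate]) simp
  from admissible[OF this]
  show "\<forall>\<^sub>F b in at_top. WADD \<mu> p0 p1 (nglr_tau est p0 (m b) b) \<le> ennreal ((1 + \<epsilon>) * b / I)"
  proof eventually_elim
    case (elim b)
    then obtain L where L: "2 \<le> L" "L \<le> m b" and ratio: "real L / (1 - q) \<le> (1 + \<epsilon>) * b / I"
      and fails: "\<And>j. emeasure (iid_law \<mu> p1) {y \<in> space (iid_law \<mu> p1). block_fails est p0 L b y j} \<le> ennreal q"
      by blast
    have "WADD \<mu> p0 p1 (nglr_tau est p0 (m b) b) \<le> ennreal (real L / (1 - q))"
      using q by (intro WADD_nglr_tau_le_of_block_fails[OF L _ _ fails]) auto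
    also have "\<dots> \<le> ennreal ((1 + \<epsilon>) * b / I)"
      using ratio by (rule ennreal_leI)
    finally show ?case .
  qed
qed

end
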